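(* Let $\mathcal{V}$ be a variety of algebras, $\mathcal{C}$ a full subcategory of the category of finitely generated free $\mathcal{V}$-algebras containing the free monogenic algebra $A_0$ on $x_0$, and $\Phi$ an automorphism of $\mathcal{C}$ with main function $(s^\Phi_A)$. Then there exists an element $\mathbf{t}(x_0)\in A_0$ (a term in the single variable $x_0$) such that for every $\mathcal{C}$-algebra $A$, $$s^\Phi_A(|A|)=\{\mathbf{t}(u)\mid u\in|\Phi(A)|\}.$$
   Context: Morphisms of $\mathcal{C}$ are all homomorphisms. For $a\in A$, $\alpha^A_a:A_0\to A$ is the homomorphism with $x_0\mapsto a$, and for $\mathbf{t}(x_0)\in A_0$ and $u$ in an algebra $B$, $\mathbf{t}(u):=\alpha^B_u(\mathbf{t}(x_0))$. Let $\eta^\Phi_0:\Phi^{-1}(A_0)\to A_0$ be the homomorphism sending every element of a fixed basis of $\Phi^{-1}(A_0)$ to $x_0$ (the identity if $\Phi(A_0)=A_0$), and $\eta^\Phi=\Phi(\eta^\Phi_0):A_0\to\Phi(A_0)$. The main function is $s^\Phi_A:|A|\to|\Phi(A)|$, $s^\Phi_A(a)=\Phi(\alpha^A_a)(\eta^\Phi(x_0))$. *)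

theory Defs
  imports Main
begin

record ('a, 'f) alg =
  car :: "'a set"
  ops :: "'f \<Rightarrow> 'a list \<Rightarrow> 'a"

definition is_alg :: "('f \<Rightarrow> nat) \<Rightarrow> ('a, 'f) alg \<Rightarrow> bool" where
  "is_alg ar A \<longleftrightarrow>
     (\<forall>f xs. length xs = ar f \<and> set xs \<subseteq> car A \<longrightarrow> ops A f xs \<in> car A)"

datatype ('f, 'v) trm = Var 'v | App 'f "('f, 'v) trm list"

fun wf_trm :: "('f \<Rightarrow> nat) \<Rightarrow> ('f, 'v) trm \<Rightarrow> bool" where
  "wf_trm ar (Var v) = True"
| "wf_trm ar (App f ts) = (length ts = ar f \<and> (\<forall>t\<in>set ts. wf_trm ar t))"

fun vars :: "('f, 'v) trm \<Rightarrow> 'v set" where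
  "vars (Var v) = {v}"
| "vars (App f ts) = (\<Union>t\<in>set ts. vars t)"

fun eval :: "('a, 'f) alg \<Rightarrow> ('v \<Rightarrow> 'a) \<Rightarrow> ('f, 'v) trm \<Rightarrow> 'a" where
  "eval A \<rho> (Var v) = \<rho> v"
| "eval A \<rho> (App f ts) = ops A f (map (eval A \<rho>) ts)"

fun subst :: "('v \<Rightarrow> ('f, 'w) trm) \<Rightarrow> ('f, 'v) trm \<Rightarrow> ('f, 'w) trm" where
  "subst \<sigma> (Var v) = \<sigma> v"
| "subst \<sigma> (App f ts) = App f (map (subst \<sigma>) ts)"

text \<open>A variety is given by a signature ar and a set E of identities (pairs of
  well-formed terms in the variables nat); its members are the models of E.\<close>

definition wf_eqns :: "('f \<Rightarrow> nat) \<Rightarrow> (('f, nat) trm \<times> ('f, nat) trm) set \<Rightarrow> bool" where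
  "wf_eqns ar E \<longleftrightarrow> (\<forall>(l, r)\<in>E. wf_trm ar l \<and> wf_trm ar r)"

definition models :: "('f \<Rightarrow> nat) \<Rightarrow> (('f, nat) trm \<times> ('f, nat) trm) set \<Rightarrow> ('a, 'f) alg \<Rightarrow> bool" where
  "models ar E A \<longleftrightarrow> is_alg ar A \<and>
     (\<forall>(l, r)\<in>E. \<forall>\<rho>. (\<forall>v. \<rho> v \<in> car A) \<longrightarrow> eval A \<rho> l = eval A \<rho> r)"

inductive derivable :: "('f \<Rightarrow> nat) \<Rightarrow> (('f, nat) trm \<times> ('f, nat) trm) set
    \<Rightarrow> ('f, 'v) trm \<Rightarrow> ('f, 'v) trm \<Rightarrow> bool"
  for ar E where
  drefl: "wf_trm ar t \<Longrightarrow> derivable ar E t t"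
| dsym: "derivable ar E s t \<Longrightarrow> derivable ar E t s"
| dtrans: "derivable ar E s t \<Longrightarrow> derivable ar E t u \<Longrightarrow> derivable ar E s u"
| dcong: "length ss = ar f \<Longrightarrow> list_all2 (derivable ar E) ss ts
            \<Longrightarrow> derivable ar E (App f ss) (App f ts)"
| dinst: "(l, r) \<in> E \<Longrightarrow> (\<forall>v. wf_trm ar (\<sigma> v))
            \<Longrightarrow> derivable ar E (subst \<sigma> l) (subst \<sigma> r)"

text \<open>A is a free algebra of the variety on the basis X: A lies in the variety,
  X generates A, and two terms over X take the same value in A (variables
  interpreted as themselves) only if they are equal in the variety, i.e. A is the
  relatively free algebra T(X)/(identities of the variety) with X as free generators.\<close>

definition free_on :: "('f \<Rightarrow> nat) \<Rightarrow> (('f, nat) trm \<times> ('f, nat) trm) set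
    \<Rightarrow> ('a, 'f) alg \<Rightarrow> 'a set \<Rightarrow> bool" where
  "free_on ar E A X \<longleftrightarrow> models ar E A \<and> X \<subseteq> car A \<and>
     (\<forall>a\<in>car A. \<exists>p. wf_trm ar p \<and> vars p \<subseteq> X \<and> eval A (\<lambda>x. x) p = a) \<and>
     (\<forall>p q. wf_trm ar p \<and> wf_trm ar q \<and> vars p \<subseteq> X \<and> vars q \<subseteq> X \<and>
        eval A (\<lambda>x. x) p = eval A (\<lambda>x. x) q \<longrightarrow> derivable ar E p q)"

definition fg_free :: "('f \<Rightarrow> nat) \<Rightarrow> (('f, nat) trm \<times> ('f, nat) trm) set
    \<Rightarrow> ('a, 'f) alg \<Rightarrow> bool" where
  "fg_free ar E A \<longleftrightarrow> (\<exists>X. finite X \<and> free_on ar E A X)"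

definition hom :: "('f \<Rightarrow> nat) \<Rightarrow> ('a, 'f) alg \<Rightarrow> ('a, 'f) alg \<Rightarrow> ('a \<Rightarrow> 'a) \<Rightarrow> bool" where
  "hom ar A B h \<longleftrightarrow> (\<forall>x\<in>car A. h x \<in> car B) \<and> (\<forall>x. x \<notin> car A \<longrightarrow> h x = undefined) \<and>
     (\<forall>f xs. length xs = ar f \<and> set xs \<subseteq> car A \<longrightarrow> h (ops A f xs) = ops B f (map h xs))"

definition idm :: "('a, 'f) alg \<Rightarrow> 'a \<Rightarrow> 'a" where
  "idm A = (\<lambda>x. if x \<in> car A then x else undefined)"

definition cmp :: "('a, 'f) alg \<Rightarrow> ('a \<Rightarrow> 'a) \<Rightarrow> ('a \<Rightarrow> 'a) \<Rightarrow> 'a \<Rightarrow> 'a" where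
  "cmp A g f = (\<lambda>x. if x \<in> car A then g (f x) else undefined)"

definition is_functor :: "('f \<Rightarrow> nat) \<Rightarrow> ('a, 'f) alg set
    \<Rightarrow> (('a, 'f) alg \<Rightarrow> ('a, 'f) alg)
    \<Rightarrow> (('a, 'f) alg \<Rightarrow> ('a, 'f) alg \<Rightarrow> ('a \<Rightarrow> 'a) \<Rightarrow> ('a \<Rightarrow> 'a)) \<Rightarrow> bool" where
  "is_functor ar C FO FM \<longleftrightarrow>
     (\<forall>A\<in>C. FO A \<in> C) \<and>
     (\<forall>A\<in>C. \<forall>B\<in>C. \<forall>h. hom ar A B h \<longrightarrow> hom ar (FO A) (FO B) (FM A B h)) \<and>
     (\<forall>A\<in>C. FM A A (idm A) = idm (FO A)) \<and>
     (\<forall>A\<in>C. \<forall>B\<in>C. \<forall>D\<in>C. \<forall>f g. hom ar A B f \<and> hom ar B D g \<longrightarrow>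
        FM A D (cmp A g f) = cmp (FO A) (FM B D g) (FM A B f))"

definition inverse_functors :: "('f \<Rightarrow> nat) \<Rightarrow> ('a, 'f) alg set
    \<Rightarrow> (('a, 'f) alg \<Rightarrow> ('a, 'f) alg)
    \<Rightarrow> (('a, 'f) alg \<Rightarrow> ('a, 'f) alg \<Rightarrow> ('a \<Rightarrow> 'a) \<Rightarrow> ('a \<Rightarrow> 'a))
    \<Rightarrow> (('a, 'f) alg \<Rightarrow> ('a, 'f) alg)
    \<Rightarrow> (('a, 'f) alg \<Rightarrow> ('a, 'f) alg \<Rightarrow> ('a \<Rightarrow> 'a) \<Rightarrow> ('a \<Rightarrow> 'a)) \<Rightarrow> bool" where
  "inverse_functors ar C FO FM GO GM \<longleftrightarrow>
     is_functor ar C FO FM \<and> is_functor ar C GO GM \<and>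
     (\<forall>A\<in>C. GO (FO A) = A \<and> FO (GO A) = A) \<and>
     (\<forall>A\<in>C. \<forall>B\<in>C. \<forall>h. hom ar A B h \<longrightarrow>
        GM (FO A) (FO B) (FM A B h) = h \<and> FM (GO A) (GO B) (GM A B h) = h)"

definition alpha :: "('f \<Rightarrow> nat) \<Rightarrow> ('a, 'f) alg \<Rightarrow> 'a \<Rightarrow> ('a, 'f) alg \<Rightarrow> 'a \<Rightarrow> 'a \<Rightarrow> 'a" where
  "alpha ar A0 x0 B u = (THE h. hom ar A0 B h \<and> h x0 = u)"

definition main_fun :: "('f \<Rightarrow> nat) \<Rightarrow> ('a, 'f) alg \<Rightarrow> 'a
    \<Rightarrow> (('a, 'f) alg \<Rightarrow> ('a, 'f) alg)
    \<Rightarrow> (('a, 'f) alg \<Rightarrow> ('a, 'f) alg \<Rightarrow> ('a \<Rightarrow> 'a) \<Rightarrow> ('a \<Rightarrow> 'a))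
    \<Rightarrow> ('a, 'f) alg \<Rightarrow> ('a \<Rightarrow> 'a) \<Rightarrow> ('a, 'f) alg \<Rightarrow> 'a \<Rightarrow> 'a" where
  "main_fun ar A0 x0 FO FM A0' eta0 A a =
     FM A0 A (alpha ar A0 x0 A a) (FM A0' A0 eta0 x0)"

end

theory Submission
  imports Defs
begin

text \<open>Let P = \<Psi>(A0), r = \<Phi>(eta0) : A0 \<rightarrow> \<Phi>(A0) and e = r(x0), so that
  s_A(a) = \<Phi>(\<alpha>_a)(e). The collapse eta0 : P \<rightarrow> A0 has a section \<sigma>, hence
  i = \<Phi>(\<sigma>) : \<Phi>(A0) \<rightarrow> A0 satisfies r \<circ> i = id, and the term is t = i(e).
  Every homomorphism out of A0 is some \<alpha>_u, so s_A(a) = \<Phi>(\<alpha>_a)(r(t)) = t(u) with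
  u = \<Phi>(\<alpha>_a)(r(x0)); conversely, since \<Phi> is full, \<alpha>_u \<circ> i = \<Phi>(\<alpha>_a) for some a,
  and then t(u) = \<alpha>_u(i(e)) = s_A(a).\<close>

section \<open>Terms and equational logic\<close>

lemma eval_in_car:
  assumes "is_alg ar B"
  shows "wf_trm ar p \<Longrightarrow> \<forall>v\<in>vars p. \<rho> v \<in> car B \<Longrightarrow> eval B \<rho> p \<in> car B"
proof (induction p)
  case (App f ts)
  then have "set (map (eval B \<rho>) ts) \<subseteq> car B" by auto
  with assms App.prems show ?case unfolding is_alg_def by auto
qed simp

lemma eval_cong: "\<forall>v\<in>vars p. \<rho> v = \<rho>' v \<Longrightarrow> eval B \<rho> p = eval B \<rho>' p"
proof (induction p)
  case (App f ts)
  then have "map (eval B \<rho>) ts = map (eval B \<rho>') ts" by auto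
  then show ?case by (simp del: map_eq_conv)
qed simp

lemma eval_subst: "eval B \<rho> (subst \<sigma> t) = eval B (\<lambda>v. eval B \<rho> (\<sigma> v)) t"
proof (induction t)
  case (App f ts)
  then have "map (eval B \<rho>) (map (subst \<sigma>) ts) = map (eval B (\<lambda>v. eval B \<rho> (\<sigma> v))) ts" by auto
  then show ?case by (simp del: map_eq_conv)
qed simp

lemma derivable_sound:
  assumes B: "models ar E B" and \<rho>: "\<forall>v. \<rho> v \<in> car B"
  shows "derivable ar E s t \<Longrightarrow> eval B \<rho> s = eval B \<rho> t"
proof (induction rule: derivable.induct)
  case (dcong ss f ts)
  have "map (eval B \<rho>) ss = map (eval B \<rho>) ts"
    using dcong(2) by (induction rule: list_all2_induct) auto
  then show ?case by (simp del: map_eq_conv)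
next
  case (dinst l r \<sigma>)
  have "is_alg ar B" using B unfolding models_def by auto
  then have "\<forall>v. eval B \<rho> (\<sigma> v) \<in> car B" using dinst eval_in_car \<rho> by blast
  then show ?case using dinst B unfolding models_def eval_subst by fastforce
qed auto

section \<open>Homomorphisms\<close>

lemma hom_eval:
  assumes h: "hom ar A B h" and A: "is_alg ar A"
  shows "wf_trm ar p \<Longrightarrow> \<forall>v\<in>vars p. \<rho> v \<in> car A \<Longrightarrow> h (eval A \<rho> p) = eval B (h \<circ> \<rho>) p"
proof (induction p)
  case (App f ts)
  then have "set (map (eval A \<rho>) ts) \<subseteq> car A" by (auto intro!: eval_in_car[OF A])
  with h App.prems have "h (eval A \<rho> (App f ts)) = ops B f (map h (map (eval A \<rho>) ts))"
    unfolding hom_def by auto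
  also have "map h (map (eval A \<rho>) ts) = map (eval B (h \<circ> \<rho>)) ts"
    using App by (auto simp: comp_def)
  finally show ?case by (simp add: comp_def del: map_eq_conv)
qed simp

lemma hom_idm: "is_alg ar A \<Longrightarrow> hom ar A A (idm A)"
  unfolding hom_def is_alg_def idm_def by (auto simp: subset_iff map_idI)

lemma hom_cmp:
  assumes A: "is_alg ar A" and f: "hom ar A B f" and g: "hom ar B D g"
  shows "hom ar A D (cmp A g f)"
  unfolding hom_def
proof (intro conjI allI impI ballI)
  fix x assume "x \<in> car A"
  then show "cmp A g f x \<in> car D" using f g unfolding hom_def cmp_def by auto
next
  fix x assume "x \<notin> car A"
  then show "cmp A g f x = undefined" unfolding cmp_def by simp
next
  fix op xs assume xs: "length xs = ar op \<and> set xs \<subseteq> car A"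
  then have "ops A op xs \<in> car A" using A unfolding is_alg_def by blast
  then have "cmp A g f (ops A op xs) = g (ops B op (map f xs))"
    using f xs unfolding hom_def cmp_def by auto
  also have "\<dots> = ops D op (map g (map f xs))"
  proof -
    have "length (map f xs) = ar op \<and> set (map f xs) \<subseteq> car B"
      using f xs unfolding hom_def by auto
    then show ?thesis using g unfolding hom_def by blast
  qed
  also have "map g (map f xs) = map (cmp A g f) xs"
    using xs unfolding cmp_def by auto
  finally show "cmp A g f (ops A op xs) = ops D op (map (cmp A g f) xs)" .
qed

lemma hom_from_empty:
  assumes "is_alg ar A" and "car A = {}"
  shows "hom ar A B (\<lambda>_. undefined)"
  using assms unfolding hom_def is_alg_def by blast

section \<open>Free algebras\<close>

lemma free_on_is_alg: "free_on ar E A X \<Longrightarrow> is_alg ar A"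
  unfolding free_on_def models_def by auto

lemma free_on_hom_eqI:
  assumes A: "free_on ar E A X" and h: "hom ar A B h" and h': "hom ar A B h'"
    and eq: "\<forall>x\<in>X. h x = h' x"
  shows "h = h'"
proof
  fix a
  show "h a = h' a"
  proof (cases "a \<in> car A")
    case True
    then obtain p where p: "wf_trm ar p" "vars p \<subseteq> X" "eval A (\<lambda>x. x) p = a"
      using A unfolding free_on_def by blast
    have X: "X \<subseteq> car A" using A unfolding free_on_def by auto
    have "h a = eval B h p"
      using hom_eval[OF h free_on_is_alg[OF A] p(1), of "\<lambda>x. x"] p X by (auto simp: comp_def subset_iff)
    also have "\<dots> = eval B h' p" using eq p(2) by (intro eval_cong) auto
    also have "\<dots> = h' a"
      using hom_eval[OF h' free_on_is_alg[OF A] p(1), of "\<lambda>x. x"] p X by (auto simp: comp_def subset_iff)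
    finally show ?thesis .
  next
    case False
    then show ?thesis using h h' unfolding hom_def by auto
  qed
qed

lemma free_on_endo_eq_idm:
  assumes "free_on ar E A X" and "hom ar A A h" and "\<forall>x\<in>X. h x = x"
  shows "h = idm A"
proof (rule free_on_hom_eqI[OF assms(1,2) hom_idm[OF free_on_is_alg[OF assms(1)]]])
  show "\<forall>x\<in>X. h x = idm A x"
    using assms(1,3) unfolding free_on_def idm_def by auto
qed

lemma free_on_eval_eq:
  assumes "free_on ar E A X" and "models ar E B" and "\<forall>v. \<rho> v \<in> car B"
    and "wf_trm ar p" "wf_trm ar q" "vars p \<subseteq> X" "vars q \<subseteq> X"
    and "eval A (\<lambda>x. x) p = eval A (\<lambda>x. x) q"
  shows "eval B \<rho> p = eval B \<rho> q"
proof (rule derivable_sound[OF assms(2,3)])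
  show "derivable ar E p q" using assms(1,4-) unfolding free_on_def by blast
qed

lemma free_on_hom_exists:
  assumes A: "free_on ar E A X" and B: "models ar E B" and \<rho>: "\<forall>x\<in>X. \<rho> x \<in> car B"
  shows "\<exists>h. hom ar A B h \<and> (\<forall>x\<in>X. h x = \<rho> x)"
proof -
  have B_alg: "is_alg ar B" using B unfolding models_def by simp
  have X: "X \<subseteq> car A" using A unfolding free_on_def by simp
  show ?thesis
  proof (cases "car B = {}")
    case True
    have "X = {}" using \<rho> True by auto
    have "car A = {}"
    proof (rule ccontr)
      assume "car A \<noteq> {}"
      then obtain p where "wf_trm ar p" "vars p \<subseteq> X"
        using A unfolding free_on_def by blast
      then have "eval B \<rho> p \<in> car B" using eval_in_car[OF B_alg] \<open>X = {}\<close> by auto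
      with True show False by simp
    qed
    then show ?thesis using hom_from_empty[OF free_on_is_alg[OF A]] \<open>X = {}\<close> by blast
  next
    case False
    then obtain b where b: "b \<in> car B" by auto
    define \<rho>' where "\<rho>' v = (if v \<in> X then \<rho> v else b)" for v
    have \<rho>': "\<forall>v. \<rho>' v \<in> car B" using \<rho> b unfolding \<rho>'_def by auto
    define rep where "rep a = (SOME p. wf_trm ar p \<and> vars p \<subseteq> X \<and> eval A (\<lambda>x. x) p = a)" for a
    have rep: "wf_trm ar (rep a) \<and> vars (rep a) \<subseteq> X \<and> eval A (\<lambda>x. x) (rep a) = a"
      if "a \<in> car A" for a
      unfolding rep_def by (rule someI_ex) (use A that in \<open>simp add: free_on_def\<close>)
    define h where "h a = (if a \<in> car A then eval B \<rho>' (rep a) else undefined)" for a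
    have h_eval: "h a = eval B \<rho>' p"
      if a: "a \<in> car A" and p: "wf_trm ar p" "vars p \<subseteq> X" "eval A (\<lambda>x. x) p = a" for a p
    proof -
      have "eval B \<rho>' (rep a) = eval B \<rho>' p"
        by (rule free_on_eval_eq[OF A B \<rho>']) (use rep[OF a] p in simp_all)
      then show ?thesis unfolding h_def using a by simp
    qed
    have "hom ar A B h"
      unfolding hom_def
    proof (intro conjI allI impI ballI)
      fix a assume a: "a \<in> car A"
      then show "h a \<in> car B"
        unfolding h_def using eval_in_car[OF B_alg] rep[OF a] \<rho>' by auto
    next
      fix a assume "a \<notin> car A"
      then show "h a = undefined" unfolding h_def by simp
    next
      fix op xs assume xs: "length xs = ar op \<and> set xs \<subseteq> car A"
      let ?p = "App op (map rep xs)"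
      have "map (eval A (\<lambda>x. x)) (map rep xs) = xs"
        using xs rep by (auto simp: subset_iff intro!: map_idI)
      then have "eval A (\<lambda>x. x) ?p = ops A op xs" by simp
      moreover have "ops A op xs \<in> car A"
        using free_on_is_alg[OF A] xs unfolding is_alg_def by blast
      moreover have "wf_trm ar ?p" "vars ?p \<subseteq> X" using xs rep by (auto simp: subset_iff)
      ultimately have "h (ops A op xs) = eval B \<rho>' ?p" by (intro h_eval)
      also have "\<dots> = ops B op (map h xs)"
      proof -
        have "map (eval B \<rho>') (map rep xs) = map h xs"
          using xs unfolding h_def by (auto simp: subset_iff)
        then show ?thesis by (simp del: map_eq_conv)
      qed
      finally show "h (ops A op xs) = ops B op (map h xs)" .
    qed
    moreover have "h x = \<rho> x" if x: "x \<in> X" for x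
    proof -
      have "h x = \<rho>' x" using h_eval[of x "Var x"] x X by auto
      then show ?thesis using x unfolding \<rho>'_def by simp
    qed
    ultimately show ?thesis by blast
  qed
qed

lemma alpha_eq:
  assumes A0: "free_on ar E A0 {x0}" and h: "hom ar A0 B h"
  shows "alpha ar A0 x0 B (h x0) = h"
  unfolding alpha_def
proof (rule the_equality)
  show "hom ar A0 B h \<and> h x0 = h x0" using h by simp
next
  fix g assume "hom ar A0 B g \<and> g x0 = h x0"
  then show "g = h" using free_on_hom_eqI[OF A0 _ h] by simp
qed

lemma alpha_hom:
  assumes A0: "free_on ar E A0 {x0}" and "models ar E B" and "u \<in> car B"
  shows "hom ar A0 B (alpha ar A0 x0 B u)" and "alpha ar A0 x0 B u x0 = u"
proof -
  obtain h where "hom ar A0 B h" "h x0 = u"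
    using free_on_hom_exists[OF A0, of B "\<lambda>_. u"] assms by auto
  then show "hom ar A0 B (alpha ar A0 x0 B u)" "alpha ar A0 x0 B u x0 = u"
    using alpha_eq[OF A0] by auto
qed

lemma cmp_alpha_eq_idm:
  assumes A0: "free_on ar E A0 {x0}" and P: "models ar E P"
    and eta: "hom ar P A0 eta" and b: "b \<in> car P" "eta b = x0"
  shows "cmp A0 eta (alpha ar A0 x0 P b) = idm A0"
proof (rule free_on_endo_eq_idm[OF A0])
  show "hom ar A0 A0 (cmp A0 eta (alpha ar A0 x0 P b))"
    using hom_cmp[OF free_on_is_alg[OF A0] alpha_hom(1)[OF A0 P b(1)] eta] .
  show "\<forall>x\<in>{x0}. cmp A0 eta (alpha ar A0 x0 P b) x = x"
    using A0 alpha_hom(2)[OF A0 P b(1)] b(2) unfolding free_on_def cmp_def by simp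
qed

section \<open>Automorphisms of a category of algebras\<close>

locale category_automorphism =
  fixes ar :: "'f \<Rightarrow> nat"
    and E :: "(('f, nat) trm \<times> ('f, nat) trm) set"
    and C :: "('a, 'f) alg set"
    and PhiO PsiO :: "('a, 'f) alg \<Rightarrow> ('a, 'f) alg"
    and PhiM PsiM :: "('a, 'f) alg \<Rightarrow> ('a, 'f) alg \<Rightarrow> ('a \<Rightarrow> 'a) \<Rightarrow> ('a \<Rightarrow> 'a)"
  assumes models_C: "A \<in> C \<Longrightarrow> models ar E A"
    and inverse: "inverse_functors ar C PhiO PhiM PsiO PsiM"
begin

lemma is_alg_C: "A \<in> C \<Longrightarrow> is_alg ar A"
  using models_C unfolding models_def by blast

lemma Phi_functor: "is_functor ar C PhiO PhiM"
  using inverse unfolding inverse_functors_def by simp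

lemma Psi_functor: "is_functor ar C PsiO PsiM"
  using inverse unfolding inverse_functors_def by simp

lemma PhiO_in_C: "A \<in> C \<Longrightarrow> PhiO A \<in> C"
  using Phi_functor unfolding is_functor_def by blast

lemma PsiO_in_C: "A \<in> C \<Longrightarrow> PsiO A \<in> C"
  using Psi_functor unfolding is_functor_def by blast

lemma hom_PhiM:
  "A \<in> C \<Longrightarrow> B \<in> C \<Longrightarrow> hom ar A B h \<Longrightarrow> hom ar (PhiO A) (PhiO B) (PhiM A B h)"
  using Phi_functor unfolding is_functor_def by blast

lemma hom_PsiM:
  "A \<in> C \<Longrightarrow> B \<in> C \<Longrightarrow> hom ar A B h \<Longrightarrow> hom ar (PsiO A) (PsiO B) (PsiM A B h)"
  using Psi_functor unfolding is_functor_def by blast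

lemma PhiM_idm: "A \<in> C \<Longrightarrow> PhiM A A (idm A) = idm (PhiO A)"
  using Phi_functor unfolding is_functor_def by blast

lemma PhiM_cmp:
  "A \<in> C \<Longrightarrow> B \<in> C \<Longrightarrow> D \<in> C \<Longrightarrow> hom ar A B f \<Longrightarrow> hom ar B D g \<Longrightarrow>
    PhiM A D (cmp A g f) = cmp (PhiO A) (PhiM B D g) (PhiM A B f)"
  using Phi_functor unfolding is_functor_def by blast

lemma PsiO_PhiO: "A \<in> C \<Longrightarrow> PsiO (PhiO A) = A"
  using inverse unfolding inverse_functors_def by blast

lemma PhiO_PsiO: "A \<in> C \<Longrightarrow> PhiO (PsiO A) = A"
  using inverse unfolding inverse_functors_def by blast

lemma PhiM_PsiM:
  "A \<in> C \<Longrightarrow> B \<in> C \<Longrightarrow> hom ar A B h \<Longrightarrow> PhiM (PsiO A) (PsiO B) (PsiM A B h) = h"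
  using inverse unfolding inverse_functors_def by blast

lemma PhiM_surj:
  assumes A: "A \<in> C" and B: "B \<in> C" and g: "hom ar (PhiO A) (PhiO B) g"
  shows "\<exists>h. hom ar A B h \<and> PhiM A B h = g"
proof (intro exI conjI)
  show "hom ar A B (PsiM (PhiO A) (PhiO B) g)"
    using hom_PsiM[OF PhiO_in_C[OF A] PhiO_in_C[OF B] g] by (simp add: PsiO_PhiO A B)
  show "PhiM A B (PsiM (PhiO A) (PhiO B) g) = g"
    using PhiM_PsiM[OF PhiO_in_C[OF A] PhiO_in_C[OF B] g] by (simp add: PsiO_PhiO A B)
qed

lemma PsiM_inj:
  assumes "A \<in> C" "B \<in> C" "hom ar A B h" "hom ar A B h'" "PsiM A B h = PsiM A B h'"
  shows "h = h'"
  using PhiM_PsiM[OF assms(1-3)] PhiM_PsiM[OF assms(1,2,4)] assms(5) by metis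

lemma image_PhiM_alpha_eq:
  assumes A0: "A0 \<in> C" "free_on ar E A0 {x0}" and A: "A \<in> C"
    and r: "hom ar A0 (PhiO A0) r" and i: "hom ar (PhiO A0) A0 i"
    and ri: "\<forall>y\<in>car (PhiO A0). r (i y) = y"
  shows "(\<lambda>a. PhiM A0 A (alpha ar A0 x0 A a) (r x0)) ` car A
           = {alpha ar A0 x0 (PhiO A) u (i (r x0)) | u. u \<in> car (PhiO A)}"
proof -
  have x0: "x0 \<in> car A0" using A0(2) unfolding free_on_def by simp
  then have e: "r x0 \<in> car (PhiO A0)" using r unfolding hom_def by blast
  then have t: "i (r x0) \<in> car A0" using i unfolding hom_def by blast
  show ?thesis
  proof (intro equalityI subsetI)
    fix y assume "y \<in> (\<lambda>a. PhiM A0 A (alpha ar A0 x0 A a) (r x0)) ` car A"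
    then obtain a where a: "a \<in> car A" and y: "y = PhiM A0 A (alpha ar A0 x0 A a) (r x0)"
      by blast
    define k where "k = cmp A0 (PhiM A0 A (alpha ar A0 x0 A a)) r"
    have k: "hom ar A0 (PhiO A) k"
      unfolding k_def using hom_cmp[OF is_alg_C[OF A0(1)] r
        hom_PhiM[OF A0(1) A alpha_hom(1)[OF A0(2) models_C[OF A] a]]] .
    have "y = k (i (r x0))" unfolding k_def cmp_def using y t ri e by simp
    also have "\<dots> = alpha ar A0 x0 (PhiO A) (k x0) (i (r x0))" using alpha_eq[OF A0(2) k] by simp
    finally show "y \<in> {alpha ar A0 x0 (PhiO A) u (i (r x0)) | u. u \<in> car (PhiO A)}"
      using k x0 unfolding hom_def by blast
  next
    fix y assume "y \<in> {alpha ar A0 x0 (PhiO A) u (i (r x0)) | u. u \<in> car (PhiO A)}"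
    then obtain u where u: "u \<in> car (PhiO A)" and y: "y = alpha ar A0 x0 (PhiO A) u (i (r x0))"
      by blast
    define g where "g = cmp (PhiO A0) (alpha ar A0 x0 (PhiO A) u) i"
    have "hom ar (PhiO A0) (PhiO A) g"
      unfolding g_def using hom_cmp[OF is_alg_C[OF PhiO_in_C[OF A0(1)]] i
        alpha_hom(1)[OF A0(2) models_C[OF PhiO_in_C[OF A]] u]] .
    then obtain h where h: "hom ar A0 A h" "PhiM A0 A h = g"
      using PhiM_surj[OF A0(1) A] by blast
    have "PhiM A0 A (alpha ar A0 x0 A (h x0)) (r x0) = g (r x0)"
      using alpha_eq[OF A0(2) h(1)] h(2) by simp
    also have "\<dots> = y" unfolding g_def cmp_def using e y by simp
    finally show "y \<in> (\<lambda>a. PhiM A0 A (alpha ar A0 x0 A a) (r x0)) ` car A"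
      using h(1) x0 unfolding hom_def by (metis image_eqI)
  qed
qed

text \<open>If \<Psi>(A) is free on no generators, it is initial, so A is initial as well, because \<Psi> is
  faithful and \<Phi> maps \<Psi>(A) \<rightarrow> \<Psi>(\<Psi>(A)) to A \<rightarrow> \<Psi>(A).\<close>

lemma hom_eq_if_PsiO_free_on_empty:
  assumes A: "A \<in> C" and B: "B \<in> C" and free: "free_on ar E (PsiO A) {}"
    and h: "hom ar A B h" and h': "hom ar A B h'"
  shows "h = h'"
proof (rule PsiM_inj[OF A B h h'])
  show "PsiM A B h = PsiM A B h'"
    using free_on_hom_eqI[OF free hom_PsiM[OF A B h] hom_PsiM[OF A B h']] by simp
qed

lemma hom_to_PsiO_if_free_on_empty:
  assumes A: "A \<in> C" and free: "free_on ar E (PsiO A) {}"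
  obtains \<sigma> where "hom ar A (PsiO A) \<sigma>"
proof -
  have PA: "PsiO A \<in> C" and PPA: "PsiO (PsiO A) \<in> C" using PsiO_in_C A by blast+
  obtain \<tau> where "hom ar (PsiO A) (PsiO (PsiO A)) \<tau>"
    using free_on_hom_exists[OF free models_C[OF PPA]] by blast
  then have "hom ar (PhiO (PsiO A)) (PhiO (PsiO (PsiO A))) (PhiM (PsiO A) (PsiO (PsiO A)) \<tau>)"
    using hom_PhiM[OF PA PPA] by blast
  then show ?thesis using that PhiO_PsiO[OF A] PhiO_PsiO[OF PA] by simp
qed

lemma collapse_has_section:
  assumes A0: "A0 \<in> C" "free_on ar E A0 {x0}"
    and P: "free_on ar E (PsiO A0) Bas"
    and eta0: "hom ar (PsiO A0) A0 eta0" and collapse: "\<forall>b\<in>Bas. eta0 b = x0"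
  obtains \<sigma> where "hom ar A0 (PsiO A0) \<sigma>" and "cmp A0 eta0 \<sigma> = idm A0"
proof (cases "Bas = {}")
  case True
  then obtain \<sigma> where \<sigma>: "hom ar A0 (PsiO A0) \<sigma>"
    using hom_to_PsiO_if_free_on_empty[OF A0(1)] P by blast
  have "cmp A0 eta0 \<sigma> = idm A0"
    using hom_eq_if_PsiO_free_on_empty[OF A0(1) A0(1)] P True
      hom_cmp[OF is_alg_C[OF A0(1)] \<sigma> eta0] hom_idm[OF is_alg_C[OF A0(1)]] by blast
  with \<sigma> show ?thesis using that by blast
next
  case False
  then obtain b where "b \<in> Bas" by blast
  then have b: "b \<in> car (PsiO A0)" "eta0 b = x0" using P collapse unfolding free_on_def by auto
  have "models ar E (PsiO A0)" using models_C PsiO_in_C A0(1) by blast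
  then show ?thesis
    using that alpha_hom(1)[OF A0(2) _ b(1)] cmp_alpha_eq_idm[OF A0(2) _ eta0 b] by blast
qed

lemma main_fun_image_term:
  assumes A0: "A0 \<in> C" "free_on ar E A0 {x0}"
    and P: "P \<in> C" "PhiO P = A0" and eta0: "hom ar P A0 eta0"
    and \<sigma>: "hom ar A0 P \<sigma>" and eta0_\<sigma>: "cmp A0 eta0 \<sigma> = idm A0"
  shows "\<exists>t\<in>car A0. \<forall>A\<in>C. main_fun ar A0 x0 PhiO PhiM P eta0 A ` car A =
           {alpha ar A0 x0 (PhiO A) u t | u. u \<in> car (PhiO A)}"
proof -
  define r where "r = PhiM P A0 eta0"
  define i where "i = PhiM A0 P \<sigma>"
  have r: "hom ar A0 (PhiO A0) r" unfolding r_def using hom_PhiM[OF P(1) A0(1) eta0] P(2) by simp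
  have i: "hom ar (PhiO A0) A0 i" unfolding i_def using hom_PhiM[OF A0(1) P(1) \<sigma>] P(2) by simp
  have "cmp (PhiO A0) r i = idm (PhiO A0)"
    using PhiM_cmp[OF A0(1) P(1) A0(1) \<sigma> eta0] PhiM_idm[OF A0(1)] eta0_\<sigma>
    unfolding r_def i_def by simp
  then have ri: "\<forall>y\<in>car (PhiO A0). r (i y) = y"
    by (auto simp: fun_eq_iff cmp_def idm_def split: if_splits)
  have "x0 \<in> car A0" using A0(2) unfolding free_on_def by simp
  then have "i (r x0) \<in> car A0" using r i unfolding hom_def by blast
  moreover have "main_fun ar A0 x0 PhiO PhiM P eta0 A ` car A =
      {alpha ar A0 x0 (PhiO A) u (i (r x0)) | u. u \<in> car (PhiO A)}" if "A \<in> C" for A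
    using image_PhiM_alpha_eq[OF A0 that r i ri] unfolding main_fun_def r_def .
  ultimately show ?thesis by blast
qed

end

theorem theorem2:
  fixes ar :: "'f \<Rightarrow> nat"
    and E :: "(('f, nat) trm \<times> ('f, nat) trm) set"
    and C :: "('a, 'f) alg set"
    and A0 :: "('a, 'f) alg" and x0 :: 'a
    and PhiO PsiO :: "('a, 'f) alg \<Rightarrow> ('a, 'f) alg"
    and PhiM PsiM :: "('a, 'f) alg \<Rightarrow> ('a, 'f) alg \<Rightarrow> ('a \<Rightarrow> 'a) \<Rightarrow> ('a \<Rightarrow> 'a)"
    and Bas :: "'a set" and eta0 :: "'a \<Rightarrow> 'a"
  assumes "wf_eqns ar E"
    and "\<forall>A\<in>C. fg_free ar E A"
    and "A0 \<in> C" and "free_on ar E A0 {x0}"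
    and "inverse_functors ar C PhiO PhiM PsiO PsiM"
    and "free_on ar E (PsiO A0) Bas"
    and "hom ar (PsiO A0) A0 eta0" and "\<forall>b\<in>Bas. eta0 b = x0"
    and "PhiO A0 = A0 \<longrightarrow> eta0 = idm A0"
  shows "\<exists>t\<in>car A0. \<forall>A\<in>C.
           main_fun ar A0 x0 PhiO PhiM (PsiO A0) eta0 A ` car A =
           {alpha ar A0 x0 (PhiO A) u t | u. u \<in> car (PhiO A)}"
proof -
  interpret category_automorphism ar E C PhiO PsiO PhiM PsiM
    using assms(2,5) by unfold_locales (auto simp: fg_free_def free_on_def)
  obtain \<sigma> where "hom ar A0 (PsiO A0) \<sigma>" and "cmp A0 eta0 \<sigma> = idm A0"
    using collapse_has_section[OF assms(3,4,6,7,8)] .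
  then show ?thesis
    using main_fun_image_term[OF assms(3,4) PsiO_in_C[OF assms(3)] PhiO_PsiO[OF assms(3)] assms(7)]
    by blast
qed

end
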